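(* For every integer $n\ge1$ there exist three real polynomials $a_1(X)$, $a_2(X)$ and $b(X)$ of degree $n$ such that (i) all the roots of $a_1$, $a_2$, $b$ and $a_1b+a_2$ are real, and (ii) all the roots of $a_2$ and of $a_1b+a_2$ are smaller than all the roots of $b$. *)

theory Defs
  imports "HOL-Computational_Algebra.Polynomial"
begin

text \<open>A real polynomial has all its roots real: every complex root of it
(viewed as a complex polynomial) is real. The zero polynomial does not
qualify, since every complex number is a root of it.\<close>
definition all_roots_real :: "real poly \<Rightarrow> bool" where
  "all_roots_real p \<longleftrightarrow>
     (\<forall>z::complex. poly (map_poly complex_of_real p) z = 0 \<longrightarrow> z \<in> \<real>)"

end

theory Submission
  imports Defs
begin

text \<open>Take \<open>b = X^n\<close>, \<open>a2 = c (X + 1) \<cdots> (X + n)\<close> and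
  \<open>a1 = X (X + R) \<cdots> (X + (n - 1) R)\<close>, where \<open>R\<close> is large and
  \<open>(2 (n + 1)^2)^n R^(n - 1) < c < (R / 2)^n\<close>. All coefficients are nonnegative,
  so neither \<open>a2\<close> nor \<open>a1 b + a2\<close> vanishes on \<open>[0, \<infinity>)\<close>, whereas \<open>b\<close> vanishes
  only at \<open>0\<close>. On the negative axis, at the points \<open>-(j + 1/2)\<close> for \<open>j \<le> n\<close> the
  term \<open>a2\<close> dominates \<open>a1 b\<close> and has sign \<open>(-1)^j\<close>, while at \<open>-(j + 1/2) R\<close> for
  \<open>j < n\<close> the term \<open>a1 b\<close> dominates and has sign \<open>(-1)^(n + 1 + j)\<close>. So \<open>a1 b + a2\<close>
  changes sign \<open>2 n\<close> times, and as its degree is \<open>2 n\<close>, all its roots are real.\<close>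

lemma map_poly_of_real_mult:
  fixes p q :: "real poly"
  shows "map_poly (of_real :: real \<Rightarrow> 'a :: {real_algebra_1, comm_ring_1}) (p * q) =
    map_poly of_real p * map_poly of_real q"
  by (simp add: poly_eq_iff coeff_mult coeff_map_poly)

lemma poly_map_poly_of_real:
  "poly (map_poly complex_of_real p) (of_real x) = of_real (poly p x)"
  by (induction p) (auto simp: map_poly_pCons)

lemma all_roots_real_mult:
  assumes "all_roots_real p" and "all_roots_real q"
  shows "all_roots_real (p * q)"
  using assms unfolding all_roots_real_def by (simp add: map_poly_of_real_mult)

lemma all_roots_real_prod:
  assumes "\<And>i. i \<in> A \<Longrightarrow> all_roots_real (f i)"
  shows "all_roots_real (\<Prod>i\<in>A. f i)"
proof (cases "finite A")
  case True
  then show ?thesis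
    using assms
  proof (induction A rule: finite_induct)
    case empty
    then show ?case by (simp add: all_roots_real_def)
  next
    case (insert i A)
    then show ?case by (simp add: all_roots_real_mult)
  qed
next
  case False
  then show ?thesis by (simp add: all_roots_real_def)
qed

lemma all_roots_real_power:
  assumes "all_roots_real p"
  shows "all_roots_real (p ^ n)"
  using all_roots_real_prod[of "{..<n}" "\<lambda>_. p"] assms by simp

lemma all_roots_real_smult:
  assumes "c \<noteq> 0" and "all_roots_real p"
  shows "all_roots_real (smult c p)"
  using assms by (simp add: all_roots_real_def map_poly_smult)

lemma all_roots_real_linear: "all_roots_real [:a, 1:]"
  unfolding all_roots_real_def
proof (intro allI impI)
  fix z :: complex
  assume "poly (map_poly of_real [:a, 1:]) z = 0"
  then have "z = - of_real a" by (simp add: map_poly_pCons add_eq_0_iff2)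
  then show "z \<in> \<real>" by simp
qed

lemma all_roots_real_if_degree_le_card_roots:
  fixes p :: "real poly"
  assumes "p \<noteq> 0" and "degree p \<le> card {x. poly p x = 0}"
  shows "all_roots_real p"
  unfolding all_roots_real_def
proof (intro allI impI, rule ccontr)
  fix z :: complex
  assume z: "poly (map_poly of_real p) z = 0" "z \<notin> \<real>"
  let ?S = "{x. poly p x = 0}" and ?q = "map_poly complex_of_real p"
  have "?q \<noteq> 0" using assms(1) by (simp add: map_poly_eq_0_iff)
  have "finite ?S" using assms(1) by (rule poly_roots_finite)
  have "z \<notin> of_real ` ?S" using z(2) by auto
  then have "Suc (card ?S) = card (insert z (of_real ` ?S))"
    using \<open>finite ?S\<close> by (simp add: card_image inj_on_def)
  also have "\<dots> \<le> card {w. poly ?q w = 0}"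
    using z(1) poly_roots_finite[OF \<open>?q \<noteq> 0\<close>]
    by (intro card_mono) (auto simp: poly_map_poly_of_real)
  also have "\<dots> \<le> degree ?q" using \<open>?q \<noteq> 0\<close> by (rule card_poly_roots_bound)
  finally show False using assms(2) by (simp add: degree_map_poly)
qed

text \<open>One real root in each of the \<open>d\<close> gaps already accounts for the whole degree.\<close>
lemma all_roots_real_if_sign_alternates:
  fixes p :: "real poly" and t :: "nat \<Rightarrow> real"
  assumes "p \<noteq> 0" and "degree p \<le> d"
    and increasing: "\<And>k. k < d \<Longrightarrow> t k < t (Suc k)"
    and alternates: "\<And>k. k < d \<Longrightarrow> poly p (t k) * poly p (t (Suc k)) < 0"
  shows "all_roots_real p"
proof -
  have "\<exists>x. t k < x \<and> x < t (Suc k) \<and> poly p x = 0" if "k < d" for k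
    using poly_IVT[OF increasing alternates] that by blast
  then obtain r where r: "\<And>k. k < d \<Longrightarrow> t k < r k \<and> r k < t (Suc k) \<and> poly p (r k) = 0"
    by metis
  have "r k < r k'" if "k < k'" "k' < d" for k k'
  proof -
    have "t (Suc k) \<le> t k'"
      by (rule lift_Suc_mono_le_ivl[of "{..<d}"]) (use that increasing less_imp_le in auto)
    then show ?thesis using r[of k] r[of k'] that by linarith
  qed
  then have "inj_on r {..<d}"
    by (intro inj_onI) (metis lessThan_iff linorder_neqE_nat order_less_irrefl)
  then have "d = card (r ` {..<d})" by (simp add: card_image)
  also have "\<dots> \<le> card {x. poly p x = 0}"
    using r poly_roots_finite[OF \<open>p \<noteq> 0\<close>] by (intro card_mono) auto
  finally show ?thesis
    using assms(1,2) by (intro all_roots_real_if_degree_le_card_roots) auto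
qed

lemma neg_one_power_card_neg_mult_prod:
  fixes g :: "'a \<Rightarrow> 'b :: linordered_idom"
  assumes "finite A"
  shows "(-1) ^ card {i\<in>A. g i < 0} * (\<Prod>i\<in>A. g i) = (\<Prod>i\<in>A. \<bar>g i\<bar>)"
  using assms
proof (induction A rule: finite_induct)
  case empty
  then show ?case by simp
next
  case (insert i A)
  show ?case
  proof (cases "g i < 0")
    case True
    then have "{j\<in>insert i A. g j < 0} = insert i {j\<in>A. g j < 0}" by auto
    then have "card {j\<in>insert i A. g j < 0} = Suc (card {j\<in>A. g j < 0})"
      using insert by simp
    then show ?thesis using insert True by (simp add: mult_ac)
  next
    case False
    then have "{j\<in>insert i A. g j < 0} = {j\<in>A. g j < 0}" by auto
    then show ?thesis using insert False by (simp add: mult_ac)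
  qed
qed

lemma prod_distance_to_half_integer:
  fixes A :: "nat set"
  assumes "finite A"
  shows "(1/2) ^ card A \<le> (-1) ^ card {k\<in>A. k \<le> j} * (\<Prod>k\<in>A. real k - (real j + 1/2))"
proof -
  have "{k\<in>A. real k - (real j + 1/2) < 0} = {k\<in>A. k \<le> j}" by auto
  then have "(-1) ^ card {k\<in>A. k \<le> j} * (\<Prod>k\<in>A. real k - (real j + 1/2)) =
      (\<Prod>k\<in>A. \<bar>real k - (real j + 1/2)\<bar>)"
    using neg_one_power_card_neg_mult_prod[OF assms, of "\<lambda>k. real k - (real j + 1/2)"] by simp
  moreover have "1/2 \<le> \<bar>real k - (real j + 1/2)\<bar>" for k
    by (cases "k \<le> j") auto
  ultimately show ?thesis
    using prod_mono[of A "\<lambda>_. 1/2 :: real" "\<lambda>k. \<bar>real k - (real j + 1/2)\<bar>"] by simp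
qed

lemma neg_one_power_mult_add_pos:
  fixes u v :: real
  assumes "\<bar>u\<bar> < (-1) ^ m * v"
  shows "0 < (-1) ^ m * (u + v)"
proof -
  have "- \<bar>u\<bar> \<le> (-1) ^ m * u"
    using abs_ge_minus_self[of "(-1) ^ m * u"] by (simp add: abs_mult)
  then show ?thesis using assms by (simp add: distrib_left)
qed

locale two_scale =
  fixes n :: nat and R c :: real
  assumes n_pos: "1 \<le> n" and R_pos: "0 < R"
    and c_gt: "(2 * (real n + 1)\<^sup>2) ^ n * R ^ (n - 1) < c"
    and c_lt: "c < (R / 2) ^ n"
begin

definition a1 :: "real poly" where
  "a1 = [:0, 1:] * (\<Prod>k\<in>{1..<n}. [:real k * R, 1:])"

definition a2 :: "real poly" where
  "a2 = smult c (\<Prod>k\<in>{1..n}. [:real k, 1:])"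

definition b :: "real poly" where
  "b = [:0, 1:] ^ n"

lemma c_pos: "0 < c"
proof -
  have "0 < (2 * (real n + 1)\<^sup>2) ^ n * R ^ (n - 1)" using R_pos by simp
  then show ?thesis using c_gt by linarith
qed

lemma R_gt_2n_plus_1: "2 * real n + 1 < R"
proof -
  let ?N = "real n + 1"
  have "(R / 2) ^ n = R ^ (n - 1) * (R / 2 ^ n)"
    using n_pos by (cases n) (simp_all add: power_divide)
  then have "R ^ (n - 1) * (2 * ?N\<^sup>2) ^ n < R ^ (n - 1) * (R / 2 ^ n)"
    using c_gt c_lt by (simp only: mult.commute)
  then have "(2 * ?N\<^sup>2) ^ n < R / 2 ^ n"
    by (simp only: mult_less_cancel_left_pos zero_less_power R_pos)
  then have "(2 * ?N\<^sup>2) ^ n * 2 ^ n < R"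
    by (simp add: pos_less_divide_eq)
  moreover have "(4 * ?N\<^sup>2) ^ n = (2 * ?N\<^sup>2) ^ n * 2 ^ n"
    unfolding power_mult_distrib[symmetric] by simp
  ultimately have "(4 * ?N\<^sup>2) ^ n < R" by (simp only:)
  moreover have N_le: "?N \<le> ?N\<^sup>2" using power_increasing[of 1 2 ?N] by simp
  then have "1 \<le> 4 * ?N\<^sup>2" by linarith
  then have "4 * ?N\<^sup>2 \<le> (4 * ?N\<^sup>2) ^ n" using n_pos by (intro self_le_power) auto
  ultimately show ?thesis using N_le by linarith
qed

lemma degree_a1: "degree a1 = n"
  using n_pos by (simp add: a1_def degree_mult_eq degree_prod_sum_eq)

lemma degree_a2: "degree a2 = n"
  using c_pos by (simp add: a2_def degree_prod_sum_eq)

lemma degree_b: "degree b = n"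
  by (simp add: b_def degree_linear_power[of 0])

lemma all_roots_real_a1: "all_roots_real a1"
  unfolding a1_def by (intro all_roots_real_mult all_roots_real_prod all_roots_real_linear)

lemma all_roots_real_a2: "all_roots_real a2"
  unfolding a2_def using c_pos
  by (intro all_roots_real_smult all_roots_real_prod all_roots_real_linear) auto

lemma all_roots_real_b: "all_roots_real b"
  unfolding b_def by (intro all_roots_real_power all_roots_real_linear)

lemma poly_a1_b_a2_minus:
  "poly (a1 * b + a2) (- y) =
    (- y) ^ (n + 1) * (\<Prod>k\<in>{1..<n}. real k * R - y) + c * (\<Prod>k\<in>{1..n}. real k - y)"
  by (simp add: a1_def a2_def b_def poly_prod mult_ac)

lemma spread_term_small_near_origin:
  assumes "0 < y" and "y \<le> real n + 1"
  shows "\<bar>(- y) ^ (n + 1) * (\<Prod>k\<in>{1..<n}. real k * R - y)\<bar> < c / 2 ^ n"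
proof -
  define N where "N = real n + 1"
  have "y < R" using assms R_gt_2n_plus_1 by (simp add: N_def)
  have "\<bar>real k * R - y\<bar> \<le> N * R" if "k \<in> {1..<n}" for k
  proof -
    have "R \<le> real k * R" "real k * R \<le> N * R"
      using that R_pos by (auto simp: N_def intro!: mult_right_mono)
    then show ?thesis using \<open>y < R\<close> assms by linarith
  qed
  then have "(\<Prod>k\<in>{1..<n}. \<bar>real k * R - y\<bar>) \<le> (N * R) ^ (n - 1)"
    using prod_mono[of "{1..<n}" "\<lambda>k. \<bar>real k * R - y\<bar>" "\<lambda>_. N * R"] by simp
  then have "\<bar>(- y) ^ (n + 1) * (\<Prod>k\<in>{1..<n}. real k * R - y)\<bar> \<le> y ^ (n + 1) * (N * R) ^ (n - 1)"
    using assms by (simp add: abs_mult abs_prod power_abs mult_left_mono)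
  also have "\<dots> \<le> N ^ (n + 1) * (N * R) ^ (n - 1)"
    using assms R_pos by (intro mult_right_mono power_mono) (auto simp: N_def)
  also have "\<dots> = N ^ (2 * n) * R ^ (n - 1)"
  proof -
    have "n + 1 + (n - 1) = 2 * n" using n_pos by simp
    then show ?thesis
      unfolding power_mult_distrib mult.assoc[symmetric] power_add[symmetric] by (simp add: mult_2)
  qed
  also have "\<dots> = (2 * N\<^sup>2) ^ n * R ^ (n - 1) / 2 ^ n"
    by (simp add: power_mult[of N 2 n] power_mult_distrib)
  also have "\<dots> < c / 2 ^ n"
    using c_gt unfolding N_def by (intro divide_strict_right_mono) simp_all
  finally show ?thesis .
qed

lemma sign_near_origin:
  assumes "j \<le> n"
  shows "0 < (-1) ^ j * poly (a1 * b + a2) (- (real j + 1/2))"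
proof -
  define y where "y = real j + 1/2"
  define C where "C = (\<Prod>k\<in>{1..n}. real k - y)"
  have "{k\<in>{1..n}. k \<le> j} = {1..j}" using assms by auto
  then have "(1/2) ^ n \<le> (-1) ^ j * C"
    using prod_distance_to_half_integer[of "{1..n}" j] by (simp add: C_def y_def)
  then have "c / 2 ^ n \<le> (-1) ^ j * (c * C)"
    using c_pos mult_left_mono[of "(1/2) ^ n" _ c] by (simp add: power_divide mult.left_commute)
  moreover have "0 < y" "y \<le> real n + 1" using assms by (simp_all add: y_def)
  ultimately have "0 < (-1) ^ j * poly (a1 * b + a2) (- y)"
    unfolding poly_a1_b_a2_minus C_def[symmetric]
    using spread_term_small_near_origin by (intro neg_one_power_mult_add_pos) fastforce
  then show ?thesis by (simp only: y_def)
qed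

lemma spread_term_large_far_from_origin:
  assumes "j < n" and y: "y = (real j + 1/2) * R"
  shows "y ^ n * (R / 2) ^ n \<le>
    (-1) ^ (n + 1 + j) * ((- y) ^ (n + 1) * (\<Prod>k\<in>{1..<n}. real k * R - y))"
proof -
  let ?P = "\<Prod>k\<in>{1..<n}. real k - (real j + 1/2)"
  have y_ge: "R / 2 \<le> y"
    using R_pos by (simp add: y algebra_simps)
  have "{k\<in>{1..<n}. k \<le> j} = {1..j}" using assms by auto
  then have "(1/2) ^ (n - 1) \<le> (-1) ^ j * ?P"
    using prod_distance_to_half_integer[of "{1..<n}" j] by simp
  then have "R ^ (n - 1) * (1/2) ^ (n - 1) \<le> R ^ (n - 1) * ((-1) ^ j * ?P)"
    using R_pos by (intro mult_left_mono) auto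
  moreover have "(\<Prod>k\<in>{1..<n}. real k * R - y) = (\<Prod>k\<in>{1..<n}. R * (real k - (real j + 1/2)))"
    by (simp add: y algebra_simps)
  then have "(\<Prod>k\<in>{1..<n}. real k * R - y) = R ^ (n - 1) * ?P"
    by (simp add: prod.distrib)
  ultimately have "(R / 2) ^ (n - 1) \<le> (-1) ^ j * (\<Prod>k\<in>{1..<n}. real k * R - y)"
    by (simp add: power_divide mult.left_commute)
  then have "y ^ (n + 1) * (R / 2) ^ (n - 1) \<le>
      y ^ (n + 1) * ((-1) ^ j * (\<Prod>k\<in>{1..<n}. real k * R - y))"
    using y_ge R_pos by (intro mult_left_mono) auto
  also have "\<dots> = (-1) ^ (n + 1 + j) * ((- y) ^ (n + 1) * (\<Prod>k\<in>{1..<n}. real k * R - y))"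
    by (simp add: power_add power_minus[of y] mult_ac)
  finally have "y ^ (n + 1) * (R / 2) ^ (n - 1) \<le>
      (-1) ^ (n + 1 + j) * ((- y) ^ (n + 1) * (\<Prod>k\<in>{1..<n}. real k * R - y))" .
  moreover have "y ^ n * (R / 2) ^ n \<le> y ^ (n + 1) * (R / 2) ^ (n - 1)"
    using n_pos y_ge R_pos by (cases n) (simp_all add: mult_right_mono mult_left_mono mult_ac)
  ultimately show ?thesis by linarith
qed

lemma sign_far_from_origin:
  assumes "j < n"
  shows "0 < (-1) ^ (n + 1 + j) * poly (a1 * b + a2) (- ((real j + 1/2) * R))"
proof -
  define y where "y = (real j + 1/2) * R"
  define C where "C = (\<Prod>k\<in>{1..n}. real k - y)"
  have "R / 2 \<le> y"
    using R_pos by (simp add: y_def algebra_simps)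
  then have "real n < y" using R_gt_2n_plus_1 by linarith
  then have "\<bar>C\<bar> \<le> y ^ n"
    using prod_mono[of "{1..n}" "\<lambda>k. \<bar>real k - y\<bar>" "\<lambda>_. y"] by (simp add: C_def abs_prod)
  then have "\<bar>c * C\<bar> \<le> c * y ^ n"
    using c_pos by (simp add: abs_mult mult_left_mono)
  also have "\<dots> < y ^ n * (R / 2) ^ n"
    using c_lt \<open>R / 2 \<le> y\<close> R_pos by (simp add: mult.commute[of c])
  also have "\<dots> \<le> (-1) ^ (n + 1 + j) * ((- y) ^ (n + 1) * (\<Prod>k\<in>{1..<n}. real k * R - y))"
    using assms y_def by (rule spread_term_large_far_from_origin)
  finally have "0 < (-1) ^ (n + 1 + j) *
      (c * C + (- y) ^ (n + 1) * (\<Prod>k\<in>{1..<n}. real k * R - y))"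
    by (rule neg_one_power_mult_add_pos)
  then show ?thesis
    unfolding y_def[symmetric] poly_a1_b_a2_minus C_def[symmetric] by (simp only: add.commute)
qed

text \<open>The \<open>2 n + 1\<close> sign-test points of the header, in increasing order.\<close>
definition test_point :: "nat \<Rightarrow> real" where
  "test_point k =
    (if k < n then - ((real (n - 1 - k) + 1/2) * R) else - (real (2 * n - k) + 1/2))"

lemma test_point_increasing:
  assumes "k < 2 * n"
  shows "test_point k < test_point (Suc k)"
proof (cases "Suc k < n")
  case True
  then have "n - 1 - k = Suc (n - 1 - Suc k)" by simp
  then show ?thesis using True R_pos by (simp add: test_point_def algebra_simps)
next
  case False
  show ?thesis
  proof (cases "k < n")
    case True
    then have "k = n - 1" "Suc k = n" using False by simp_all
    then show ?thesis using R_gt_2n_plus_1 by (simp add: test_point_def)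
  next
    case False
    then have "2 * n - k = Suc (2 * n - Suc k)" using assms by simp
    then show ?thesis using False by (simp add: test_point_def)
  qed
qed

lemma sign_at_test_point:
  assumes "k \<le> 2 * n"
  shows "0 < (-1) ^ k * poly (a1 * b + a2) (test_point k)"
proof (cases "k < n")
  case True
  then have "(-1) ^ (n + 1 + (n - 1 - k)) = (-1 :: real) ^ k"
    by (simp add: minus_one_power_iff)
  then show ?thesis
    using sign_far_from_origin[of "n - 1 - k"] True by (simp add: test_point_def)
next
  case False
  then have "(-1) ^ (2 * n - k) = (-1 :: real) ^ k"
    using assms by (simp add: minus_one_power_iff)
  then show ?thesis
    using sign_near_origin[of "2 * n - k"] assms False by (simp add: test_point_def)
qed

lemma all_roots_real_a1_b_a2: "all_roots_real (a1 * b + a2)"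
proof (rule all_roots_real_if_sign_alternates[where d = "2 * n" and t = test_point])
  show "a1 * b + a2 \<noteq> 0"
  proof
    assume "a1 * b + a2 = 0"
    with sign_at_test_point[of 0] show False by simp
  qed
  have "degree (a1 * b) \<le> 2 * n"
    using degree_mult_le[of a1 b] by (simp add: degree_a1 degree_b)
  then show "degree (a1 * b + a2) \<le> 2 * n"
    using degree_a2 by (intro degree_add_le) simp_all
next
  fix k
  assume k: "k < 2 * n"
  then show "test_point k < test_point (Suc k)"
    by (rule test_point_increasing)
  have alternate: "u * v < 0" if "0 < (-1) ^ k * u" "0 < (-1) ^ Suc k * v" for u v :: real
  proof -
    have "0 < ((-1) ^ k * u) * ((-1) ^ Suc k * v)"
      using that by (rule mult_pos_pos)
    then show ?thesis by (simp add: mult_ac)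
  qed
  show "poly (a1 * b + a2) (test_point k) * poly (a1 * b + a2) (test_point (Suc k)) < 0"
    using k by (intro alternate sign_at_test_point) simp_all
qed

lemma poly_a2_pos: "0 \<le> x \<Longrightarrow> 0 < poly a2 x"
  using c_pos by (auto simp: a2_def poly_prod intro!: mult_pos_pos prod_pos)

lemma poly_a1_b_a2_pos:
  assumes "0 \<le> x"
  shows "0 < poly (a1 * b + a2) x"
proof -
  have "0 \<le> poly a1 x"
    using assms R_pos by (simp add: a1_def poly_prod prod_nonneg)
  moreover have "0 \<le> poly b x"
    using assms by (simp add: b_def)
  ultimately show ?thesis
    using poly_a2_pos[OF assms] by (simp add: add_nonneg_pos)
qed

lemma roots_left_of_roots_b:
  assumes "poly a2 x = 0 \<or> poly (a1 * b + a2) x = 0" and "poly b y = 0"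
  shows "x < y"
proof -
  have "y = 0" using assms(2) by (simp add: b_def)
  moreover have "x < 0"
  proof (rule ccontr)
    assume "\<not> x < 0"
    then show False
      using assms(1) poly_a2_pos[of x] poly_a1_b_a2_pos[of x] by simp
  qed
  ultimately show ?thesis by simp
qed

end

lemma two_scale_exists:
  assumes "1 \<le> n"
  shows "\<exists>R c. two_scale n R c"
proof -
  let ?N = "real n + 1"
  define R where "R = (16 * ?N\<^sup>2) ^ n"
  define c where "c = R ^ (n - 1) * (4 * ?N\<^sup>2) ^ n"
  have "0 < R" by (simp add: R_def)
  have "(2 * ?N\<^sup>2) ^ n < (4 * ?N\<^sup>2) ^ n" "(4 * ?N\<^sup>2) ^ n < (8 * ?N\<^sup>2) ^ n"
    using assms by (auto intro!: power_strict_mono)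
  moreover have "(R / 2) ^ n = R ^ (n - 1) * (8 * ?N\<^sup>2) ^ n"
  proof -
    have "(R / 2) ^ n = R ^ (n - 1) * (R / 2 ^ n)"
      using assms by (cases n) (simp_all add: power_divide)
    moreover have "R = 2 ^ n * (8 * ?N\<^sup>2) ^ n"
      unfolding R_def power_mult_distrib[symmetric] by simp
    ultimately show ?thesis by simp
  qed
  ultimately have "two_scale n R c"
    using assms \<open>0 < R\<close> by unfold_locales (simp_all add: c_def mult.commute[of _ "R ^ (n - 1)"])
  then show ?thesis by blast
qed

theorem corollary5p2:
  fixes n :: nat
  assumes "n \<ge> 1"
  shows "\<exists>a1 a2 b :: real poly.
           degree a1 = n \<and> degree a2 = n \<and> degree b = n \<and>
           all_roots_real a1 \<and> all_roots_real a2 \<and> all_roots_real b \<and>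
           all_roots_real (a1 * b + a2) \<and>
           (\<forall>x y. (poly a2 x = 0 \<or> poly (a1 * b + a2) x = 0) \<longrightarrow>
                  poly b y = 0 \<longrightarrow> x < y)"
proof -
  obtain R c where "two_scale n R c"
    using two_scale_exists[OF assms] by blast
  then interpret two_scale n R c .
  show ?thesis
    using degree_a1 degree_a2 degree_b all_roots_real_a1 all_roots_real_a2 all_roots_real_b
      all_roots_real_a1_b_a2 roots_left_of_roots_b
    by blast
qed

end
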